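(* Let $A=(n_A)_{n\ge0}$ be a cobweb tiling sequence with $0_A=1$, and let $s\ge0$ be an integer. Define the shifted sequence $B=\oplus_sA=(n_B)_{n\ge0}$ by $n_B=1$ for $n<s$ and $n_B=(n-s)_A$ for $n\ge s$. Then $B$ is also a cobweb tiling sequence.
   Context: Notation: $n_F\equiv F_n$. A sequence $F=(n_F)_{n\ge0}$ of natural numbers with $0_F=1$ is cobweb-admissible iff every $F$-nomial coefficient $\binom{n}{k}_F=\frac{n_F(n-1)_F\cdots(n-k+1)_F}{1_F2_F\cdots k_F}$, $0\le k\le n$, is a nonnegative integer. The cobweb poset of $F$ has, for each $s\ge1$, a level $\Phi_s$ consisting of $s_F$ distinct vertices (levels pairwise disjoint), plus a root level $\Phi_0$ with one vertex; for $x\in\Phi_i$, $y\in\Phi_j$ one has $x<y$ iff $i<j$. For $1\le a\le b$, the layer $\langle\Phi_a\to\Phi_b\rangle$ is the subposet on $\Phi_a\cup\dots\cup\Phi_b$; it has $m=b-a+1$ levels and its maximal chains form the set $\Phi_a\times\dots\times\Phi_b$. For a permutation $\sigma$ of $\{1,\dots,m\}$, a block of type $\sigma P_m$ in this layer is the subposet induced on $V_a\cup\dots\cup V_b$ where $V_{a-1+i}\subseteq\Phi_{a-1+i}$ and $|V_{a-1+i}|=\sigma(i)_F$ for $i=1,\dots,m$; its maximal chains form the set $V_a\times\dots\times V_b$. A tiling of the layer is a finite family of such blocks ($\sigma$ may vary from block to block) whose sets $V_a\times\dots\times V_b$ partition $\Phi_a\times\dots\times\Phi_b$ (pairwise max-disjoint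 and covering all maximal chains). A cobweb tiling sequence is a cobweb-admissible sequence $F$ such that for all $1\le a\le b$ the layer $\langle\Phi_a\to\Phi_b\rangle$ admits a tiling by blocks of type $\sigma P_{b-a+1}$. *)

theory Defs
  imports Main "HOL-Library.FuncSet"
begin

text \<open>Vertex j of level l of the cobweb poset is encoded as the index j < F l of level l
  (levels are disjoint by construction). A maximal chain of the layer from level a to
  level b is a choice function on {a..b} picking one vertex in each level.\<close>

definition cobweb_admissible :: "(nat \<Rightarrow> nat) \<Rightarrow> bool" where
  "cobweb_admissible F \<longleftrightarrow> F 0 = 1 \<and>
     (\<forall>n k. k \<le> n \<longrightarrow>
        (\<Prod>i\<in>{1..k}. F i) \<noteq> 0 \<and> (\<Prod>i\<in>{1..k}. F i) dvd (\<Prod>i<k. F (n - i)))"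

definition max_chains :: "(nat \<Rightarrow> nat) \<Rightarrow> nat \<Rightarrow> nat \<Rightarrow> (nat \<Rightarrow> nat) set" where
  "max_chains F a b = Pi\<^sub>E {a..b} (\<lambda>l. {..<F l})"

definition is_block :: "(nat \<Rightarrow> nat) \<Rightarrow> nat \<Rightarrow> nat \<Rightarrow> (nat \<Rightarrow> nat set) \<Rightarrow> bool" where
  "is_block F a b V \<longleftrightarrow> (\<forall>l\<in>{a..b}. V l \<subseteq> {..<F l}) \<and>
     (\<exists>\<sigma>. bij_betw \<sigma> {1..b - a + 1} {1..b - a + 1} \<and>
          (\<forall>i\<in>{1..b - a + 1}. card (V (a - 1 + i)) = F (\<sigma> i)))"

definition block_chains :: "nat \<Rightarrow> nat \<Rightarrow> (nat \<Rightarrow> nat set) \<Rightarrow> (nat \<Rightarrow> nat) set" where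
  "block_chains a b V = Pi\<^sub>E {a..b} V"

definition is_tiling :: "(nat \<Rightarrow> nat) \<Rightarrow> nat \<Rightarrow> nat \<Rightarrow> (nat \<Rightarrow> nat set) set \<Rightarrow> bool" where
  "is_tiling F a b T \<longleftrightarrow> finite T \<and> (\<forall>V\<in>T. is_block F a b V) \<and>
     (\<forall>V\<in>T. \<forall>W\<in>T. V \<noteq> W \<longrightarrow> block_chains a b V \<inter> block_chains a b W = {}) \<and>
     (\<Union>V\<in>T. block_chains a b V) = max_chains F a b"

definition cobweb_tiling :: "(nat \<Rightarrow> nat) \<Rightarrow> bool" where
  "cobweb_tiling F \<longleftrightarrow> cobweb_admissible F \<and>
     (\<forall>a b. 1 \<le> a \<and> a \<le> b \<longrightarrow> (\<exists>T. is_tiling F a b T))"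

definition shift_seq :: "nat \<Rightarrow> (nat \<Rightarrow> nat) \<Rightarrow> nat \<Rightarrow> nat" where
  "shift_seq s A n = (if n < s then 1 else A (n - s))"

end

theory Submission
  imports Defs
begin

text \<open>
  Let B = shift_seq s A, so that B l = 1 for l \<le> s (using A 0 = 1) and B l = A (l - s)
  for l \<ge> s.  Admissibility of B is immediate: every B-nomial coefficient is an
  A-nomial coefficient times a product of further B values.

  For the tilings consider a layer from level a to level b, with m = b - a + 1 levels.
  A block of type sigma P_m has level sizes B 1, ..., B m in some order.
  \<^item> If m \<le> s, all these sizes are 1, so the layer is tiled by its maximal chains,
    each taken as a block on its own.
  \<^item> If m > s, the levels a + s .. b of B are the levels a .. b - s of A.  Take a tiling
    of that A-layer; every block W of it, together with a fixed choice x of one vertex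
    in each of the first s levels a .. a + s - 1, yields a B-block extend_block a s x W.
    Its type is the permutation of A's block shifted by s and extended by the identity
    on 1 .. s.  Letting x range over all choices gives a tiling of the B-layer.
\<close>

section \<open>The shifted sequence\<close>

lemma shift_seq_low:
  assumes "A 0 = 1" and "l \<le> s"
  shows "shift_seq s A l = 1"
  using assms by (auto simp: shift_seq_def)

lemma shift_seq_high:
  assumes "s \<le> l"
  shows "shift_seq s A l = A (l - s)"
  using assms by (auto simp: shift_seq_def)

text \<open>The denominators of the B-nomial coefficients are those of A.\<close>

lemma prod_shift_seq:
  assumes "A 0 = 1"
  shows "(\<Prod>i\<in>{1..k}. shift_seq s A i) = (\<Prod>i\<in>{1..k - s}. A i)"
proof (induction k)
  case 0
  then show ?case by simp
next
  case (Suc k)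
  show ?case
  proof (cases "Suc k \<le> s")
    case True
    then show ?thesis using Suc shift_seq_low[where A=A, OF assms True] by simp
  next
    case False
    then have "Suc k - s = Suc (k - s)" by arith
    moreover have "shift_seq s A (Suc k) = A (Suc (k - s))"
      using False by (simp add: shift_seq_high Suc_diff_le)
    ultimately show ?thesis using Suc by simp
  qed
qed

lemma cobweb_admissible_shift:
  assumes adm: "cobweb_admissible A" and A0: "A 0 = 1"
  shows "cobweb_admissible (shift_seq s A)"
  unfolding cobweb_admissible_def
proof (intro conjI allI impI)
  show "shift_seq s A 0 = 1" using A0 by (simp add: shift_seq_def)
next
  fix n k :: nat
  assume "k \<le> n"
  then have "k - s \<le> n - s" by simp
  then have A_adm: "(\<Prod>i\<in>{1..k - s}. A i) \<noteq> 0"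
      "(\<Prod>i\<in>{1..k - s}. A i) dvd (\<Prod>i<k - s. A (n - s - i))"
    using adm unfolding cobweb_admissible_def by blast+
  show "(\<Prod>i\<in>{1..k}. shift_seq s A i) \<noteq> 0"
    unfolding prod_shift_seq[where A=A, OF A0] by (rule A_adm(1))
  have "(\<Prod>i<k - s. A (n - s - i)) = (\<Prod>i<k - s. shift_seq s A (n - i))"
    using \<open>k \<le> n\<close> by (intro prod.cong) (auto simp: shift_seq_high add.commute)
  also have "\<dots> dvd (\<Prod>i<k. shift_seq s A (n - i))"
    by (rule prod_dvd_prod_subset) auto
  finally have "(\<Prod>i<k - s. A (n - s - i)) dvd (\<Prod>i<k. shift_seq s A (n - i))" .
  with A_adm(2) show "(\<Prod>i\<in>{1..k}. shift_seq s A i) dvd (\<Prod>i<k. shift_seq s A (n - i))"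
    unfolding prod_shift_seq[where A=A, OF A0] by (rule dvd_trans)
qed

section \<open>Generalities on blocks\<close>

lemma block_chains_subset_max_chains:
  assumes "is_block F a b V"
  shows "block_chains a b V \<subseteq> max_chains F a b"
  using assms unfolding is_block_def block_chains_def max_chains_def by (auto intro: PiE_mono)

lemma block_chains_singletons:
  assumes "f \<in> extensional {a..b}"
  shows "block_chains a b (\<lambda>l. {f l}) = {f}"
  using assms unfolding block_chains_def
  by (auto simp: PiE_iff extensional_def intro: extensionalityI[of _ "{a..b}"])

lemma tiling_by_single_chains:
  assumes ones: "\<forall>i\<in>{1..b - a + 1}. F i = 1"
  shows "is_tiling F a b ((\<lambda>f l. {f l}) ` max_chains F a b)"
proof -
  have chains: "block_chains a b (\<lambda>l. {f l}) = {f}" if "f \<in> max_chains F a b" for f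
    using that unfolding max_chains_def by (intro block_chains_singletons) (simp add: PiE_iff)
  have block: "is_block F a b (\<lambda>l. {f l})" if "f \<in> max_chains F a b" for f
    unfolding is_block_def
  proof (intro conjI exI[of _ id])
    show "\<forall>l\<in>{a..b}. {f l} \<subseteq> {..<F l}" using that unfolding max_chains_def by auto
  qed (use ones in auto)
  show ?thesis
    unfolding is_tiling_def using chains block
    by (auto simp: max_chains_def intro!: finite_PiE)
qed

definition shift_perm :: "nat \<Rightarrow> (nat \<Rightarrow> nat) \<Rightarrow> nat \<Rightarrow> nat" where
  "shift_perm s \<sigma> i = (if i \<le> s then i else s + \<sigma> (i - s))"

lemma bij_betw_shift_perm:
  assumes "bij_betw \<sigma> {1..n} {1..n}"
  shows "bij_betw (shift_perm s \<sigma>) {1..s + n} {1..s + n}"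
proof -
  have low: "bij_betw (shift_perm s \<sigma>) {1..s} {1..s}"
    by (rule bij_betw_cong[THEN iffD1, of _ id]) (auto simp: shift_perm_def)
  have down: "bij_betw (\<lambda>i. i - s) {s + 1..s + n} {1..n}"
    by (rule bij_betw_byWitness[of _ "\<lambda>i. i + s"]) force+
  have up: "bij_betw ((+) s) {1..n} {s + 1..s + n}"
    by simp
  have "bij_betw ((+) s \<circ> (\<sigma> \<circ> (\<lambda>i. i - s))) {s + 1..s + n} {s + 1..s + n}"
    using bij_betw_trans[OF bij_betw_trans[OF down assms] up] .
  then have high: "bij_betw (shift_perm s \<sigma>) {s + 1..s + n} {s + 1..s + n}"
    by (rule bij_betw_cong[THEN iffD1, rotated]) (auto simp: shift_perm_def)
  have "{1..s + n} = {1..s} \<union> {s + 1..s + n}" by auto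
  then show ?thesis using bij_betw_combine[OF low high] by auto
qed

section \<open>Layers with more than s levels\<close>

lemma ball_levels_split:
  fixes a b s :: nat
  assumes "a + s \<le> b"
  shows "(\<forall>l\<in>{a..b}. P l) \<longleftrightarrow> (\<forall>l\<in>{a..<a + s}. P l) \<and> (\<forall>l\<in>{a..b - s}. P (l + s))"
proof
  assume "\<forall>l\<in>{a..b}. P l"
  then show "(\<forall>l\<in>{a..<a + s}. P l) \<and> (\<forall>l\<in>{a..b - s}. P (l + s))"
    using assms by auto
next
  assume "(\<forall>l\<in>{a..<a + s}. P l) \<and> (\<forall>l\<in>{a..b - s}. P (l + s))"
  then have low: "\<forall>l\<in>{a..<a + s}. P l" and high: "\<forall>l\<in>{a..b - s}. P (l + s)"
    by blast+
  show "\<forall>l\<in>{a..b}. P l"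
  proof
    fix l assume l: "l \<in> {a..b}"
    show "P l"
    proof (cases "l < a + s")
      case True
      then show ?thesis using low l by auto
    next
      case False
      then have "l - s \<in> {a..b - s}" using l by auto
      then have "P (l - s + s)" using high by blast
      moreover have "l - s + s = l" using False by simp
      ultimately show ?thesis by simp
    qed
  qed
qed

text \<open>The vertex sets of the B-block obtained from an A-block W (occupying the B-levels
  a + s .. b) by fixing the vertex x l on each of the first s levels.\<close>

definition extend_block :: "nat \<Rightarrow> nat \<Rightarrow> (nat \<Rightarrow> nat) \<Rightarrow> (nat \<Rightarrow> nat set) \<Rightarrow> nat \<Rightarrow> nat set" where
  "extend_block a s x W l = (if l < a + s then {x l} else W (l - s))"

definition tail_chain :: "nat \<Rightarrow> nat \<Rightarrow> nat \<Rightarrow> (nat \<Rightarrow> nat) \<Rightarrow> nat \<Rightarrow> nat" where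
  "tail_chain s a c f = restrict (\<lambda>l. f (l + s)) {a..c}"

lemma block_chains_extend_block:
  assumes "a + s \<le> b"
  shows "f \<in> block_chains a b (extend_block a s x W) \<longleftrightarrow>
    f \<in> extensional {a..b} \<and> (\<forall>l\<in>{a..<a + s}. f l = x l) \<and>
    tail_chain s a (b - s) f \<in> block_chains a (b - s) W"
proof -
  have "(\<forall>l\<in>{a..b}. f l \<in> extend_block a s x W l) \<longleftrightarrow>
      (\<forall>l\<in>{a..<a + s}. f l = x l) \<and> (\<forall>l\<in>{a..b - s}. f (l + s) \<in> W l)"
    unfolding ball_levels_split[OF assms] by (auto simp: extend_block_def)
  then show ?thesis
    unfolding block_chains_def tail_chain_def PiE_iff[of f] restrict_PiE_iff by blast
qed

lemma tail_chain_max_chains: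
  assumes "a + s \<le> b" and "f \<in> max_chains (shift_seq s A) a b"
  shows "tail_chain s a (b - s) f \<in> max_chains A a (b - s)"
  unfolding max_chains_def tail_chain_def
proof (rule restrict_PiE_iff[THEN iffD2], intro ballI)
  fix l assume "l \<in> {a..b - s}"
  then have "f (l + s) < shift_seq s A (l + s)"
    using assms by (auto simp: max_chains_def PiE_iff)
  then show "f (l + s) \<in> {..<A l}" by (simp add: shift_seq_high)
qed

lemma is_block_extend_block:
  assumes A0: "A 0 = 1" and "1 \<le> a" and "a + s \<le> b"
    and x: "\<forall>l\<in>{a..<a + s}. x l < shift_seq s A l"
    and W: "is_block A a (b - s) W"
  shows "is_block (shift_seq s A) a b (extend_block a s x W)"
proof -
  let ?n = "b - s - a + 1"
  from W obtain \<sigma> where W_levels: "\<forall>l\<in>{a..b - s}. W l \<subseteq> {..<A l}"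
    and \<sigma>: "bij_betw \<sigma> {1..?n} {1..?n}"
    and W_sizes: "\<forall>i\<in>{1..?n}. card (W (a - 1 + i)) = A (\<sigma> i)"
    unfolding is_block_def by blast
  have m: "b - a + 1 = s + ?n" using assms(3) by arith
  show ?thesis
    unfolding is_block_def m
  proof (intro conjI exI[of _ "shift_perm s \<sigma>"] ballI)
    fix l assume l: "l \<in> {a..b}"
    show "extend_block a s x W l \<subseteq> {..<shift_seq s A l}"
    proof (cases "l < a + s")
      case True
      then show ?thesis using x l by (auto simp: extend_block_def)
    next
      case False
      then have "l - s \<in> {a..b - s}" using l by auto
      then show ?thesis using False W_levels by (auto simp: extend_block_def shift_seq_high)
    qed
  next
    show "bij_betw (shift_perm s \<sigma>) {1..s + ?n} {1..s + ?n}"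
      by (rule bij_betw_shift_perm[OF \<sigma>])
  next
    fix i assume i: "i \<in> {1..s + ?n}"
    show "card (extend_block a s x W (a - 1 + i)) = shift_seq s A (shift_perm s \<sigma> i)"
    proof (cases "i \<le> s")
      case True
      then have "a - 1 + i < a + s" using \<open>1 \<le> a\<close> by arith
      then show ?thesis
        using True by (simp add: extend_block_def shift_perm_def shift_seq_low[where A=A, OF A0])
    next
      case False
      define j where "j = i - s"
      have j: "i = s + j" "j \<in> {1..?n}" using False i unfolding j_def by auto
      have "extend_block a s x W (a - 1 + i) = W (a - 1 + j)"
        using j \<open>1 \<le> a\<close> by (auto simp: extend_block_def)
      then show ?thesis
        using j W_sizes by (simp add: shift_perm_def shift_seq_high)
    qed
  qed
qed

lemma tiling_extend_blocks:
  assumes A0: "A 0 = 1" and "1 \<le> a" and ab: "a + s \<le> b"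
    and TA: "is_tiling A a (b - s) TA"
  defines "X \<equiv> Pi\<^sub>E {a..<a + s} (\<lambda>l. {..<shift_seq s A l})"
  shows "is_tiling (shift_seq s A) a b ((\<lambda>(x, W). extend_block a s x W) ` (X \<times> TA))"
    (is "is_tiling ?B a b ?T")
proof -
  have "finite TA" and TA_blocks: "\<And>W. W \<in> TA \<Longrightarrow> is_block A a (b - s) W"
    and TA_disjoint: "\<And>W W'. W \<in> TA \<Longrightarrow> W' \<in> TA \<Longrightarrow> W \<noteq> W' \<Longrightarrow>
        block_chains a (b - s) W \<inter> block_chains a (b - s) W' = {}"
    and TA_cover: "(\<Union>W\<in>TA. block_chains a (b - s) W) = max_chains A a (b - s)"
    using TA unfolding is_tiling_def by auto
  note chains = block_chains_extend_block[OF ab]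
  have "finite X" unfolding X_def by (intro finite_PiE) auto
  have blocks: "is_block ?B a b V" if "V \<in> ?T" for V
  proof -
    from that obtain x W where "x \<in> X" "W \<in> TA" "V = extend_block a s x W" by auto
    moreover from \<open>x \<in> X\<close> have "\<forall>l\<in>{a..<a + s}. x l < ?B l"
      unfolding X_def by (simp add: PiE_iff)
    ultimately show ?thesis
      using TA_blocks is_block_extend_block[where A=A, OF A0 \<open>1 \<le> a\<close> ab] by blast
  qed
  have disjoint: "block_chains a b (extend_block a s x W) \<inter> block_chains a b (extend_block a s x' W') = {}"
    if "x \<in> X" "x' \<in> X" "W \<in> TA" "W' \<in> TA"
      and "extend_block a s x W \<noteq> extend_block a s x' W'" for x x' W W'
  proof (rule ccontr)
    assume "block_chains a b (extend_block a s x W) \<inter> block_chains a b (extend_block a s x' W') \<noteq> {}"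
    then obtain f where f: "f \<in> block_chains a b (extend_block a s x W)"
      "f \<in> block_chains a b (extend_block a s x' W')" by blast
    have "x \<in> extensional {a..<a + s}" "x' \<in> extensional {a..<a + s}"
      using that(1,2) unfolding X_def by (simp_all add: PiE_iff)
    moreover have "\<forall>l\<in>{a..<a + s}. x l = x' l"
      using f unfolding chains by simp
    ultimately have "x = x'" by (blast intro: extensionalityI)
    moreover have "W = W'"
      using TA_disjoint[OF that(3,4)] f unfolding chains by blast
    ultimately show False using that(5) by simp
  qed
  have cover: "max_chains ?B a b \<subseteq> (\<Union>V\<in>?T. block_chains a b V)"
  proof
    fix f assume f: "f \<in> max_chains ?B a b"
    define x where "x = restrict f {a..<a + s}"
    have "x \<in> X" using f ab unfolding x_def X_def max_chains_def by (auto simp: PiE_iff)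
    obtain W where "W \<in> TA" and "tail_chain s a (b - s) f \<in> block_chains a (b - s) W"
      using tail_chain_max_chains[OF ab f] TA_cover by blast
    moreover have "f \<in> extensional {a..b}" using f unfolding max_chains_def by (simp add: PiE_iff)
    ultimately have "f \<in> block_chains a b (extend_block a s x W)"
      unfolding chains x_def by simp
    moreover have "extend_block a s x W \<in> ?T" using \<open>x \<in> X\<close> \<open>W \<in> TA\<close> by force
    ultimately show "f \<in> (\<Union>V\<in>?T. block_chains a b V)" by blast
  qed
  show ?thesis
    unfolding is_tiling_def
  proof (intro conjI ballI impI)
    show "finite ?T" using \<open>finite X\<close> \<open>finite TA\<close> by simp
    show "(\<Union>V\<in>?T. block_chains a b V) = max_chains ?B a b"
      using cover blocks block_chains_subset_max_chains by blast
  next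
    fix V V' assume "V \<in> ?T" "V' \<in> ?T" "V \<noteq> V'"
    then obtain x W x' W' where "x \<in> X" "W \<in> TA" "V = extend_block a s x W"
      and "x' \<in> X" "W' \<in> TA" "V' = extend_block a s x' W'" by auto
    with \<open>V \<noteq> V'\<close> show "block_chains a b V \<inter> block_chains a b V' = {}"
      using disjoint by blast
  qed (use blocks in blast)
qed

theorem mainTheorem5:
  fixes A :: "nat \<Rightarrow> nat" and s :: nat
  assumes "cobweb_tiling A" and "A 0 = 1"
  shows "cobweb_tiling (shift_seq s A)"
proof -
  have adm: "cobweb_admissible A"
    and tilings: "\<And>a b. 1 \<le> a \<Longrightarrow> a \<le> b \<Longrightarrow> \<exists>T. is_tiling A a b T"
    using assms(1) unfolding cobweb_tiling_def by blast+
  have "\<exists>T. is_tiling (shift_seq s A) a b T" if "1 \<le> a" "a \<le> b" for a b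
  proof (cases "b < a + s")
    case True
    have "\<forall>i\<in>{1..b - a + 1}. shift_seq s A i = 1"
    proof
      fix i assume "i \<in> {1..b - a + 1}"
      then have "i \<le> s" using True that by auto
      then show "shift_seq s A i = 1" by (rule shift_seq_low[where A=A, OF assms(2)])
    qed
    then show ?thesis using tiling_by_single_chains by blast
  next
    case False
    then have "a + s \<le> b" by simp
    then have "a \<le> b - s" by arith
    then obtain TA where "is_tiling A a (b - s) TA"
      using tilings[OF \<open>1 \<le> a\<close>] by blast
    then show ?thesis
      using tiling_extend_blocks[where A=A, OF assms(2) \<open>1 \<le> a\<close> \<open>a + s \<le> b\<close>] by blast
  qed
  then show ?thesis
    using cobweb_admissible_shift[where A=A, OF adm assms(2)] unfolding cobweb_tiling_def by blast
qed

end
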